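(* Let $\upsilon\in(0,1]$, $P_b>0$, $h>0$, $T>0$, $\sigma^2>0$, $B>0$, $L>0$. Consider Problem P4: maximize $S_{\mathrm{off}}(t)=\upsilon P_bhT+\left(\frac{\sigma^2}{h}-\upsilon P_bh\right)t-\frac{\sigma^2}{h}t\,2^{\frac{L}{Bt}}$ over $t$ subject to $0<t<T$ and $S_{\mathrm{off}}(t)\ge 0$. Let $W$ be the principal branch of the Lambert function ($W(x)e^{W(x)}=x$), let $$\rho(h)=\frac{\ln 2}{B\left[1+W\!\left(\frac{\upsilon P_bh^2}{\sigma^2e}-\frac1e\right)\right]},$$ and define $$a''=\frac{\sigma^2}{\upsilon}\left\{1+\left[\frac{L\ln2}{BT}+W\!\left(-e^{-1-\frac{L\ln2}{BT}}\right)\right]\exp\!\left(\frac{L\ln2}{BT}+W\!\left(-e^{-1-\frac{L\ln 2}{BT}}\right)+1\right)\right\}.$$ Then the optimal offloading duration $t^*$ solving P4 satisfies: (1) if $P_bh^2<a''$, Problem P4 is infeasible; (2) if $P_bh^2\ge a''$, $t^*=\rho(h)L$.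
   Context: In the offloading mode the interval $[0,T]$ is split into power transfer of length $T-t$ (harvesting $\upsilon P_bh(T-t)$) followed by fixed-rate transmission of $L$ bits over duration $t$ with bandwidth $B$, channel power gain $h$ and noise variance $\sigma^2$ (energy $(2^{L/(Bt)}-1)\frac{\sigma^2}{h}t$); $S_{\mathrm{off}}$ is the resulting energy savings. *)

theory Defs
  imports Complex_Main
begin

text \<open>Principal branch of the Lambert W function: for x \<ge> -1/e, the unique w \<ge> -1
  with w * exp w = x.\<close>
definition lambertW :: "real \<Rightarrow> real" where
  "lambertW x = (THE w. -1 \<le> w \<and> w * exp w = x)"

definition S_off :: "real \<Rightarrow> real \<Rightarrow> real \<Rightarrow> real \<Rightarrow> real \<Rightarrow> real \<Rightarrow> real \<Rightarrow> real \<Rightarrow> real" where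
  "S_off ups Pb h T sigma2 B L t =
     ups * Pb * h * T + (sigma2 / h - ups * Pb * h) * t - sigma2 / h * t * 2 powr (L / (B * t))"

definition rho :: "real \<Rightarrow> real \<Rightarrow> real \<Rightarrow> real \<Rightarrow> real \<Rightarrow> real" where
  "rho ups Pb sigma2 B h =
     ln 2 / (B * (1 + lambertW (ups * Pb * h^2 / (sigma2 * exp 1) - 1 / exp 1)))"

definition a2 :: "real \<Rightarrow> real \<Rightarrow> real \<Rightarrow> real \<Rightarrow> real \<Rightarrow> real" where
  "a2 ups sigma2 B T L =
     (let c = L * ln 2 / (B * T); w = lambertW (- exp (-1 - c))
      in sigma2 / ups * (1 + (c + w) * exp (c + w + 1)))"

definition P4_feasible :: "real \<Rightarrow> real \<Rightarrow> real \<Rightarrow> real \<Rightarrow> real \<Rightarrow> real \<Rightarrow> real \<Rightarrow> real \<Rightarrow> bool" where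
  "P4_feasible ups Pb h T sigma2 B L t \<longleftrightarrow>
     0 < t \<and> t < T \<and> S_off ups Pb h T sigma2 B L t \<ge> 0"

end

theory Submission
  imports Defs
begin

text \<open>
  After dividing by \<open>\<sigma>\<^sup>2/h\<close>, the savings become \<open>F\<^sub>A(t) = A T + (1 - A) t - t e\<^sup>c\<^sup>/\<^sup>t\<close> with
  \<open>A = \<upsilon> P\<^sub>b h\<^sup>2/\<sigma>\<^sup>2\<close> and \<open>c = L ln 2 / B\<close>. Writing \<open>A = 1 + (u - 1) e\<^sup>u\<close> with \<open>u > 0\<close>, the gap
  \<open>F\<^sub>A(c/u) - F\<^sub>A(t)\<close> is \<open>t\<close> times the gap between \<open>exp\<close> and its tangent at \<open>u\<close>, evaluated
  at \<open>c/t\<close>; hence \<open>c/u\<close> is the unique maximiser, and solving for \<open>u\<close> gives the Lambert W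
  expression for \<open>\<rho>\<close>. Since \<open>F\<^sub>A(t) - F\<^sub>A\<^sub>0(t) = (A - A\<^sub>0)(T - t)\<close>, feasibility is decided by the
  level \<open>A\<^sub>0\<close> whose maximum value is exactly \<open>0\<close>; that condition is again a Lambert W
  equation, and \<open>a''\<close> is \<open>\<sigma>\<^sup>2 A\<^sub>0 / \<upsilon>\<close>.
\<close>

lemma strict_mono_on_mult_exp: "strict_mono_on {-1..} (\<lambda>x::real. x * exp x)"
proof (rule strict_mono_onI)
  fix a b :: real
  assume "a \<in> {-1..}" "a < b"
  show "a * exp a < b * exp b"
  proof (rule DERIV_pos_imp_increasing_open[OF \<open>a < b\<close>])
    fix x assume "a < x"
    with \<open>a \<in> {-1..}\<close> have "0 < (1 + x) * exp x" by simp
    then show "\<exists>y. ((\<lambda>x. x * exp x) has_real_derivative y) (at x) \<and> 0 < y"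
      by (intro exI[of _ "(1 + x) * exp x"]) (auto intro!: derivative_eq_intros simp: algebra_simps)
  qed (intro continuous_intros)
qed

lemma mult_exp_less_iff:
  fixes a b :: real
  assumes "-1 \<le> a" "-1 \<le> b"
  shows "a * exp a < b * exp b \<longleftrightarrow> a < b"
  using strict_mono_on_less[OF strict_mono_on_mult_exp] assms by simp

lemma lambertW_exists:
  fixes x :: real
  assumes "- exp (-1) \<le> x"
  shows "\<exists>w\<ge>-1. w * exp w = x"
proof -
  define M where "M = max 0 x"
  have "x \<le> M * exp M"
  proof (cases "x \<ge> 0")
    case True
    then have "x * 1 \<le> x * exp x" by (intro mult_left_mono) auto
    with True show ?thesis by (simp add: M_def)
  qed (simp add: M_def)
  moreover have "(-1) * exp (-1) \<le> x" "-1 \<le> M" using assms by (auto simp: M_def)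
  moreover have "continuous_on {-1..M} (\<lambda>w. w * exp w)" by (intro continuous_intros)
  ultimately show ?thesis
    using IVT'[of "\<lambda>w. w * exp w" "-1" x M] by auto
qed

lemma lambertW_eqI:
  fixes w x :: real
  assumes "-1 \<le> w" "w * exp w = x"
  shows "lambertW x = w"
  unfolding lambertW_def
proof (rule the_equality)
  fix v assume "-1 \<le> v \<and> v * exp v = x"
  with assms show "v = w"
    using strict_mono_on_imp_inj_on[OF strict_mono_on_mult_exp] by (auto simp: inj_on_def)
qed (use assms in simp)

lemma lambertW_ge_minus_one:
  fixes x :: real
  assumes "- exp (-1) \<le> x"
  shows "-1 \<le> lambertW x"
  using lambertW_exists[OF assms] lambertW_eqI by metis

lemma lambertW_times_exp_self:
  fixes x :: real
  assumes "- exp (-1) \<le> x"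
  shows "lambertW x * exp (lambertW x) = x"
  using lambertW_exists[OF assms] lambertW_eqI by metis

lemma lambertW_gt_minus_one:
  fixes x :: real
  assumes "- exp (-1) < x"
  shows "-1 < lambertW x"
proof -
  have "lambertW x \<noteq> -1"
    using lambertW_times_exp_self[of x] assms by force
  with lambertW_ge_minus_one[of x] assms show ?thesis by simp
qed

definition normalized_savings :: "real \<Rightarrow> real \<Rightarrow> real \<Rightarrow> real \<Rightarrow> real" where
  "normalized_savings A T c t = A * T + (1 - A) * t - t * exp (c / t)"

lemma S_off_eq_normalized_savings:
  assumes "0 < h" "0 < sigma2"
  shows "S_off ups Pb h T sigma2 B L t =
           sigma2 / h * normalized_savings (ups * Pb * h^2 / sigma2) T (L * ln 2 / B) t"
  using assms unfolding S_off_def normalized_savings_def powr_def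
  by (simp add: field_simps power2_eq_square)

lemma normalized_savings_at_stationary_point:
  assumes "c > 0" "u > 0" "A = 1 + (u - 1) * exp u"
  shows "normalized_savings A T c (c / u) = A * T - c * exp u"
proof -
  have "c / (c / u) = u" using assms by simp
  then show ?thesis using assms unfolding normalized_savings_def assms(3) by (simp add: field_simps)
qed

lemma normalized_savings_less_stationary:
  assumes "c > 0" "u > 0" "t > 0" "A = 1 + (u - 1) * exp u" "t \<noteq> c / u"
  shows "normalized_savings A T c t < normalized_savings A T c (c / u)"
proof -
  define y where "y = c / t - u"
  have "y \<noteq> 0" using assms by (auto simp: y_def field_simps)
  then have "exp u * (1 + y) < exp u * exp y"
    using exp_minus_greater[of "-y"] by simp
  also have "exp u * exp y = exp (c / t)" by (simp add: y_def flip: exp_add)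
  finally have "0 < t * (exp (c / t) - exp u * (1 + y))" using assms by simp
  also have "t * (exp (c / t) - exp u * (1 + y)) =
               normalized_savings A T c (c / u) - normalized_savings A T c t"
    using assms unfolding normalized_savings_def y_def assms(4) by (simp add: field_simps)
  finally show ?thesis by simp
qed

lemma normalized_savings_le_stationary:
  assumes "c > 0" "u > 0" "t > 0" "A = 1 + (u - 1) * exp u"
  shows "normalized_savings A T c t \<le> normalized_savings A T c (c / u)"
  using less_imp_le[OF normalized_savings_less_stationary[OF assms]] by (cases "t = c / u") auto

lemma normalized_savings_shift:
  "normalized_savings A T c t = normalized_savings A0 T c t + (A - A0) * (T - t)"
  unfolding normalized_savings_def by (simp add: algebra_simps)

text \<open>The hypothesis \<open>A\<^sub>0 T = c e\<^sup>u\<^sup>0\<close> says that at level \<open>A\<^sub>0\<close> the maximum value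
  \<open>F\<^sub>A\<^sub>0(c/u\<^sub>0)\<close> is \<open>0\<close>.\<close>

lemma normalized_savings_neg_below_threshold:
  assumes "c > 0" "u0 > 0" "A0 = 1 + (u0 - 1) * exp u0" "A0 * T = c * exp u0"
    and "A < A0" "0 < t" "t < T"
  shows "normalized_savings A T c t < 0"
proof -
  have "normalized_savings A0 T c t \<le> normalized_savings A0 T c (c / u0)"
    using normalized_savings_le_stationary assms by blast
  also have "\<dots> = 0"
    using normalized_savings_at_stationary_point assms by simp
  finally show ?thesis
    using normalized_savings_shift[of A T c t A0] assms mult_neg_pos[of "A - A0" "T - t"]
    by linarith
qed

lemma normalized_savings_nonneg_above_threshold:
  assumes "c > 0" "u0 > 0" "A0 = 1 + (u0 - 1) * exp u0" "A0 * T = c * exp u0" "c < u0 * T"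
    and "u > 0" "A = 1 + (u - 1) * exp u" "A0 \<le> A"
  shows "c / u < T" "0 \<le> normalized_savings A T c (c / u)"
proof -
  have "exp 1 * ((u0 - 1) * exp (u0 - 1)) \<le> exp 1 * ((u - 1) * exp (u - 1))"
    using assms by (simp add: exp_diff)
  then have "u0 \<le> u"
    using mult_exp_less_iff[of "u - 1" "u0 - 1"] assms by (simp add: not_less[symmetric])
  moreover have "0 < T" using assms(1,2,5) by (smt (verit) mult_nonneg_nonpos)
  ultimately have "c < u * T" using assms(5) by (smt (verit) mult_right_mono)
  with assms show "c / u < T" by (simp add: divide_less_eq mult.commute)
  have "c / u0 \<le> T" using assms by (simp add: divide_le_eq mult.commute)
  then have "0 \<le> normalized_savings A T c (c / u0)"
    using normalized_savings_shift[of A T c "c / u0" A0] assms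
      normalized_savings_at_stationary_point[of c u0 A0 T] by simp
  also have "\<dots> \<le> normalized_savings A T c (c / u)"
    using normalized_savings_le_stationary assms by simp
  finally show "0 \<le> normalized_savings A T c (c / u)" .
qed

lemma stationary_point_lambertW:
  fixes A :: real
  assumes "A > 0"
  defines "u \<equiv> 1 + lambertW ((A - 1) / exp 1)"
  shows "u > 0" "A = 1 + (u - 1) * exp u"
proof -
  have x: "- exp (-1) < (A - 1) / exp 1" using assms by (simp add: exp_minus field_simps)
  then show "u > 0" using lambertW_gt_minus_one u_def by fastforce
  have "exp u = exp (u - 1) * exp 1" by (simp flip: exp_add)
  then show "A = 1 + (u - 1) * exp u"
    using lambertW_times_exp_self[OF less_imp_le[OF x]] by (simp add: u_def field_simps)
qed

lemma threshold_point_lambertW: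
  fixes c T :: real
  assumes "c > 0" "T > 0"
  defines "u0 \<equiv> c / T + lambertW (- exp (-1 - c / T)) + 1"
  shows "0 < u0" "c < u0 * T" "(1 + (u0 - 1) * exp u0) * T = c * exp u0"
proof -
  define cp where "cp = c / T"
  define w where "w = lambertW (- exp (-1 - cp))"
  have cp: "0 < cp" "c = cp * T" using assms by (simp_all add: cp_def)
  have x: "- exp (-1) < - exp (-1 - cp)" using cp by simp
  then have "cp < u0" using lambertW_gt_minus_one[OF x] by (simp add: u0_def cp_def)
  with cp assms show "0 < u0" "c < u0 * T" by simp_all
  have "w * exp u0 = (w * exp w) * exp (1 + cp)"
    by (simp add: u0_def w_def cp_def mult.assoc add_ac flip: exp_add)
  also have "w * exp w = - exp (-1 - cp)"
    using lambertW_times_exp_self[OF less_imp_le[OF x]] by (simp add: w_def)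
  finally have "w * exp u0 = -1" by (simp flip: exp_add)
  then show "(1 + (u0 - 1) * exp u0) * T = c * exp u0"
    using assms by (simp add: u0_def w_def cp_def algebra_simps)
qed

theorem theorem2:
  fixes ups Pb h T sigma2 B L :: real
  assumes "0 < ups" "ups \<le> 1" "0 < Pb" "0 < h" "0 < T" "0 < sigma2" "0 < B" "0 < L"
  shows "(Pb * h^2 < a2 ups sigma2 B T L \<longrightarrow>
            \<not> (\<exists>t. P4_feasible ups Pb h T sigma2 B L t))
       \<and> (Pb * h^2 \<ge> a2 ups sigma2 B T L \<longrightarrow>
            (let tstar = rho ups Pb sigma2 B h * L in
               P4_feasible ups Pb h T sigma2 B L tstar \<and>
               (\<forall>t. P4_feasible ups Pb h T sigma2 B L t \<and> t \<noteq> tstar \<longrightarrow>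
                    S_off ups Pb h T sigma2 B L t < S_off ups Pb h T sigma2 B L tstar)))"
proof -
  define A where "A = ups * Pb * h^2 / sigma2"
  define c where "c = L * ln 2 / B"
  define u0 where "u0 = c / T + lambertW (- exp (-1 - c / T)) + 1"
  define u where "u = 1 + lambertW ((A - 1) / exp 1)"
  have pos: "0 < c" "0 < A" "0 < sigma2 / h" using assms by (simp_all add: A_def c_def)
  note thr = threshold_point_lambertW[OF pos(1) assms(5), folded u0_def]
  note u = stationary_point_lambertW[OF pos(2), folded u_def]
  have S: "S_off ups Pb h T sigma2 B L t = sigma2 / h * normalized_savings A T c t" for t
    using S_off_eq_normalized_savings assms by (simp add: A_def c_def)
  have feasible: "P4_feasible ups Pb h T sigma2 B L t \<longleftrightarrow>
                    0 < t \<and> t < T \<and> 0 \<le> normalized_savings A T c t" for t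
    unfolding P4_feasible_def S using pos(3) by (smt (verit) zero_le_mult_iff)
  have a2: "Pb * h^2 < a2 ups sigma2 B T L \<longleftrightarrow> A < 1 + (u0 - 1) * exp u0"
    unfolding a2_def Let_def u0_def c_def A_def using assms by (simp add: field_simps)
  have rho: "rho ups Pb sigma2 B h * L = c / u"
    unfolding rho_def u_def c_def A_def using assms by (simp add: field_simps)
  have improves: "S_off ups Pb h T sigma2 B L t < S_off ups Pb h T sigma2 B L (c / u)"
    if "0 < t" "t \<noteq> c / u" for t
    unfolding S
    using normalized_savings_less_stationary[OF pos(1) u(1) that(1) u(2) that(2)] pos(3)
    by (rule mult_strict_left_mono)
  show ?thesis
    unfolding Let_def rho a2 feasible not_less[symmetric]
    using normalized_savings_neg_below_threshold[OF pos(1) thr(1) refl thr(3)]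
      normalized_savings_nonneg_above_threshold[OF pos(1) thr(1) refl thr(3,2) u]
      improves divide_pos_pos[OF pos(1) u(1)]
    by auto
qed

end
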